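(* There exist an integer $K\ge1$, signs $\varepsilon_1,\dots,\varepsilon_K\in\{-1,1\}$ and labels $x_{1,k},x_{2,k}\in\{x^+,x^-,x^{\natural+},x^{\natural-}\}$ ($k=1,\dots,K$), such that, setting $\mathcal U(x^+)=\sum_{k=1}^K\varepsilon_k\,x_{1,k}^{\otimes 2}\otimes x_{2,k}^{\otimes2}$ (an order-4 tensor on $\mathbb R^{2n}$, where $x^-=Mx^+$), one has for all $x^+\in\mathbb R^{2n}$ $$f(x^+)=\Big\langle\sum_{i=1}^m(a_i^+)^{\otimes4},\ \mathcal U(x^+)\Big\rangle=c\,\langle\mathcal T,\mathcal U(x^+)\rangle.$$
   Context: Let $n,m\ge 1$, $a_1,\dots,a_m\in\mathbb C^n$ and $x^\natural\in\mathbb C^n$. For $a,b\in\mathbb C^n$ write $\langle a,b\rangle=\sum_{j}a_j\overline{b_j}$. Let $y_i=|\langle a_i,x^\natural\rangle|^2$. For $v\in\mathbb C^n$ put $v^+=(\mathrm{Re}\,v,\mathrm{Im}\,v)\in\mathbb R^{2n}$ and $v^-=Mv^+=(-\mathrm{Im}\,v,\mathrm{Re}\,v)$, where $M=\begin{bmatrix}0&-I_n\\ I_n&0\end{bmatrix}$. The map $x\mapsto x^+$ identifies $\mathbb C^n$ with $\mathbb R^{2n}$. Define $f:\mathbb R^{2n}\to\mathbb R$ by $f(x^+)=\sum_{i=1}^m\big(|\langle a_i,x\rangle|^2-y_i\big)^2$. Fix $\sigma>0$ (in the paper, $\sigma^2=\mathrm{Var}((a_i^+)_1)$ for random measurement vectors),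 set $c=m\sigma^4$ and $\mathcal T=\frac1c\sum_{i=1}^m(a_i^+)^{\otimes4}$. The inner product of order-4 tensors is the sum of entrywise products. *)

theory Defs
  imports Complex_Main
begin

text \<open>Vectors in C^n are functions nat => complex (entries 0..n-1);
 vectors in R^{2n} are functions nat => real (entries 0..2n-1);
 order-4 tensors on R^{2n} are functions on index quadruples.\<close>

definition cinner :: "nat \<Rightarrow> (nat \<Rightarrow> complex) \<Rightarrow> (nat \<Rightarrow> complex) \<Rightarrow> complex" where
  "cinner n a b = (\<Sum>j<n. a j * cnj (b j))"

definition vplus :: "nat \<Rightarrow> (nat \<Rightarrow> complex) \<Rightarrow> nat \<Rightarrow> real" where
  "vplus n v = (\<lambda>j. if j < n then Re (v j) else Im (v (j - n)))"

definition toC :: "nat \<Rightarrow> (nat \<Rightarrow> real) \<Rightarrow> nat \<Rightarrow> complex" where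
  "toC n u = (\<lambda>j. Complex (u j) (u (j + n)))"

text \<open>M = [[0,-I],[I,0]] applied to u in R^{2n}\<close>
definition Mmul :: "nat \<Rightarrow> (nat \<Rightarrow> real) \<Rightarrow> nat \<Rightarrow> real" where
  "Mmul n u = (\<lambda>j. if j < n then - u (j + n) else u (j - n))"

definition meas :: "nat \<Rightarrow> (nat \<Rightarrow> nat \<Rightarrow> complex) \<Rightarrow> (nat \<Rightarrow> complex) \<Rightarrow> nat \<Rightarrow> real" where
  "meas n a xn i = (cmod (cinner n (a i) xn))\<^sup>2"

definition f_loss :: "nat \<Rightarrow> nat \<Rightarrow> (nat \<Rightarrow> nat \<Rightarrow> complex) \<Rightarrow> (nat \<Rightarrow> complex) \<Rightarrow> (nat \<Rightarrow> real) \<Rightarrow> real" where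
  "f_loss n m a xn u = (\<Sum>i<m. ((cmod (cinner n (a i) (toC n u)))\<^sup>2 - meas n a xn i)\<^sup>2)"

type_synonym tensor4 = "nat \<times> nat \<times> nat \<times> nat \<Rightarrow> real"

definition tpow4 :: "(nat \<Rightarrow> real) \<Rightarrow> tensor4" where
  "tpow4 v = (\<lambda>(i,j,k,l). v i * v j * v k * v l)"

definition tsq2 :: "(nat \<Rightarrow> real) \<Rightarrow> (nat \<Rightarrow> real) \<Rightarrow> tensor4" where
  "tsq2 v w = (\<lambda>(i,j,k,l). v i * v j * w k * w l)"

definition tinner :: "nat \<Rightarrow> tensor4 \<Rightarrow> tensor4 \<Rightarrow> real" where
  "tinner N S T = (\<Sum>i<N. \<Sum>j<N. \<Sum>k<N. \<Sum>l<N. S (i,j,k,l) * T (i,j,k,l))"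

datatype label = Xp | Xm | XNp | XNm

fun labvec :: "nat \<Rightarrow> (nat \<Rightarrow> real) \<Rightarrow> (nat \<Rightarrow> complex) \<Rightarrow> label \<Rightarrow> nat \<Rightarrow> real" where
  "labvec n u xn Xp = u"
| "labvec n u xn Xm = Mmul n u"
| "labvec n u xn XNp = vplus n xn"
| "labvec n u xn XNm = Mmul n (vplus n xn)"

definition Utensor :: "nat \<Rightarrow> nat \<Rightarrow> (nat \<Rightarrow> real) \<Rightarrow> (nat \<Rightarrow> label) \<Rightarrow> (nat \<Rightarrow> label)
    \<Rightarrow> (nat \<Rightarrow> complex) \<Rightarrow> (nat \<Rightarrow> real) \<Rightarrow> tensor4" where
  "Utensor n K eps l1 l2 xn u =
     (\<lambda>idx. \<Sum>k<K. eps k * tsq2 (labvec n u xn (l1 k)) (labvec n u xn (l2 k)) idx)"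

definition Ttensor :: "nat \<Rightarrow> nat \<Rightarrow> real \<Rightarrow> (nat \<Rightarrow> nat \<Rightarrow> complex) \<Rightarrow> tensor4" where
  "Ttensor n m c a = (\<lambda>idx. (1 / c) * (\<Sum>i<m. tpow4 (vplus n (a i)) idx))"

end

theory Submission
  imports Defs
begin

text \<open>Under the identification of \<open>\<complex>\<^sup>n\<close> with \<open>\<real>\<^sup>2\<^sup>n\<close>, the real and imaginary parts of
  \<open>\<langle>a, x\<rangle>\<close> are \<open>a\<^sup>+ \<cdot> x\<^sup>+\<close> and \<open>a\<^sup>+ \<cdot> x\<^sup>-\<close>, so each residual \<open>|\<langle>a\<^sub>i, x\<rangle>|\<^sup>2 - y\<^sub>i\<close> is
  the signed sum of the four squares \<open>(a\<^sub>i\<^sup>+ \<cdot> v)\<^sup>2\<close>, \<open>v \<in> {x\<^sup>+, x\<^sup>-, x\<natural>\<^sup>+, x\<natural>\<^sup>-}\<close>.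
  Squaring it gives 16 signed products \<open>(a \<cdot> v)\<^sup>2 (a \<cdot> w)\<^sup>2 = \<langle>a\<^sup>\<otimes>\<^sup>4, v\<^sup>\<otimes>\<^sup>2 \<otimes> w\<^sup>\<otimes>\<^sup>2\<rangle>\<close>,
  and summing over \<open>i\<close> uses bilinearity of the tensor inner product; the factor \<open>c\<close> simply
  cancels the \<open>1/c\<close> in \<open>\<T>\<close>.\<close>

definition rinner :: "nat \<Rightarrow> (nat \<Rightarrow> real) \<Rightarrow> (nat \<Rightarrow> real) \<Rightarrow> real" where
  "rinner N v w = (\<Sum>j<N. v j * w j)"

lemma sum_lessThan_double:
  fixes g :: "nat \<Rightarrow> 'a::comm_monoid_add"
  shows "(\<Sum>j<2 * n. g j) = (\<Sum>j<n. g j) + (\<Sum>j<n. g (j + n))"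
proof -
  have "{..<2 * n} = {..<n} \<union> {n..<n + n}" by auto
  then have "(\<Sum>j<2 * n. g j) = (\<Sum>j<n. g j) + (\<Sum>j\<in>{n..<n + n}. g j)"
    by (simp add: sum.union_disjoint ivl_disj_int)
  also have "(\<Sum>j\<in>{n..<n + n}. g j) = (\<Sum>j<n. g (j + n))"
    using sum.shift_bounds_nat_ivl[of g 0 n n] by (simp add: lessThan_atLeast0)
  finally show ?thesis .
qed

lemma sum_lessThan_mult_div_mod:
  fixes F :: "nat \<Rightarrow> nat \<Rightarrow> 'a::comm_monoid_add"
  shows "(\<Sum>k<N * M. F (k div M) (k mod M)) = (\<Sum>i<N. \<Sum>j<M. F i j)"
proof -
  have "i * M + j < N * M" if "i < N" "j < M" for i j
  proof -
    have "i * M + j < Suc i * M" using that by simp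
    also have "\<dots> \<le> N * M" using that by (intro mult_right_mono) auto
    finally show ?thesis .
  qed
  moreover have "k mod M < M" if "k < N * M" for k
    using that by (cases "M = 0") auto
  ultimately have "(\<Sum>k<N * M. F (k div M) (k mod M)) = (\<Sum>(i, j)\<in>{..<N} \<times> {..<M}. F i j)"
    by (intro sum.reindex_bij_witness[where i = "\<lambda>(i, j). i * M + j" and j = "\<lambda>k. (k div M, k mod M)"])
      (auto simp: less_mult_imp_div_less)
  then show ?thesis by (simp add: sum.cartesian_product)
qed

lemma Re_cinner_toC: "Re (cinner n a (toC n u)) = rinner (2 * n) (vplus n a) u"
  unfolding rinner_def sum_lessThan_double cinner_def vplus_def toC_def
  by (simp add: Re_sum sum.distrib)

lemma Im_cinner_toC: "Im (cinner n a (toC n u)) = rinner (2 * n) (vplus n a) (Mmul n u)"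
  unfolding rinner_def sum_lessThan_double cinner_def vplus_def toC_def Mmul_def
  by (simp add: Im_sum sum.distrib sum_subtractf sum_negf algebra_simps)

lemma cmod_cinner_toC_squared:
  "(cmod (cinner n a (toC n u)))\<^sup>2 = (rinner (2 * n) (vplus n a) u)\<^sup>2 + (rinner (2 * n) (vplus n a) (Mmul n u))\<^sup>2"
  by (simp add: cmod_power2 Re_cinner_toC Im_cinner_toC)

lemma cinner_toC_vplus: "cinner n a (toC n (vplus n x)) = cinner n a x"
  unfolding cinner_def toC_def vplus_def by (intro sum.cong) auto

lemma tinner_sum_left: "tinner N (\<lambda>idx. \<Sum>i<m. S i idx) T = (\<Sum>i<m. tinner N (S i) T)"
  unfolding tinner_def
  by (simp add: sum_distrib_right sum.swap[of _ "{..<m}"])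

lemma tinner_scale_left: "tinner N (\<lambda>idx. r * S idx) T = r * tinner N S T"
  unfolding tinner_def by (simp add: sum_distrib_left mult.assoc)

lemma tinner_lincomb_right:
  "tinner N S (\<lambda>idx. \<Sum>k<K. e k * T k idx) = (\<Sum>k<K. e k * tinner N S (T k))"
  unfolding tinner_def
  by (simp add: sum_distrib_left sum_distrib_right mult_ac sum.swap[of _ "{..<K}"])

lemma tinner_tpow4_tsq2: "tinner N (tpow4 a) (tsq2 v w) = (rinner N a v)\<^sup>2 * (rinner N a w)\<^sup>2"
proof -
  have square: "(rinner N a x)\<^sup>2 = (\<Sum>i<N. \<Sum>j<N. a i * x i * (a j * x j))" for x
    unfolding rinner_def power2_eq_square by (simp add: sum_product)
  have "(rinner N a v)\<^sup>2 * (rinner N a w)\<^sup>2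
      = (\<Sum>i<N. \<Sum>j<N. \<Sum>k<N. \<Sum>l<N. a i * v i * (a j * v j) * (a k * w k * (a l * w l)))"
    unfolding square by (simp only: sum_distrib_right) (simp only: sum_distrib_left)
  also have "\<dots> = tinner N (tpow4 a) (tsq2 v w)"
    unfolding tinner_def tpow4_def tsq2_def by (simp add: mult_ac)
  finally show ?thesis by simp
qed

fun label_of_index :: "nat \<Rightarrow> label" where
  "label_of_index 0 = Xp"
| "label_of_index (Suc 0) = Xm"
| "label_of_index (Suc (Suc 0)) = XNp"
| "label_of_index _ = XNm"

fun label_sign :: "label \<Rightarrow> real" where
  "label_sign Xp = 1"
| "label_sign Xm = 1"
| "label_sign XNp = -1"
| "label_sign XNm = -1"

definition loss_label1 :: "nat \<Rightarrow> label" where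
  "loss_label1 k = label_of_index (k div 4)"

definition loss_label2 :: "nat \<Rightarrow> label" where
  "loss_label2 k = label_of_index (k mod 4)"

definition loss_sign :: "nat \<Rightarrow> real" where
  "loss_sign k = label_sign (loss_label1 k) * label_sign (loss_label2 k)"

lemma loss_sign_cases: "loss_sign k \<in> {-1, 1}"
  unfolding loss_sign_def
  by (cases "loss_label1 k"; cases "loss_label2 k") auto

lemma sum_loss_sign_expansion:
  fixes g :: "label \<Rightarrow> real"
  shows "(\<Sum>k<16. loss_sign k * ((g (loss_label1 k))\<^sup>2 * (g (loss_label2 k))\<^sup>2))
    = ((g Xp)\<^sup>2 + (g Xm)\<^sup>2 - (g XNp)\<^sup>2 - (g XNm)\<^sup>2)\<^sup>2"
proof -
  define w where "w b = label_sign (label_of_index b) * (g (label_of_index b))\<^sup>2" for b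
  have "(\<Sum>k<16. loss_sign k * ((g (loss_label1 k))\<^sup>2 * (g (loss_label2 k))\<^sup>2))
      = (\<Sum>i<4. \<Sum>j<4. w i * w j)"
    using sum_lessThan_mult_div_mod[of "\<lambda>i j. w i * w j" 4 4]
    by (simp add: w_def loss_sign_def loss_label1_def loss_label2_def mult_ac)
  also have "\<dots> = (\<Sum>b<4. w b)\<^sup>2"
    by (simp add: power2_eq_square sum_product)
  also have "(\<Sum>b<4. w b) = (g Xp)\<^sup>2 + (g Xm)\<^sup>2 - (g XNp)\<^sup>2 - (g XNm)\<^sup>2"
    by (simp add: w_def numeral_eq_Suc)
  finally show ?thesis .
qed

lemma tinner_tpow4_loss_tensor:
  "tinner (2 * n) (tpow4 (vplus n b)) (Utensor n 16 loss_sign loss_label1 loss_label2 xn u)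
    = ((cmod (cinner n b (toC n u)))\<^sup>2 - (cmod (cinner n b xn))\<^sup>2)\<^sup>2"
proof -
  define g where "g l = rinner (2 * n) (vplus n b) (labvec n u xn l)" for l
  have "tinner (2 * n) (tpow4 (vplus n b)) (Utensor n 16 loss_sign loss_label1 loss_label2 xn u)
      = (\<Sum>k<16. loss_sign k * ((g (loss_label1 k))\<^sup>2 * (g (loss_label2 k))\<^sup>2))"
    unfolding Utensor_def tinner_lincomb_right tinner_tpow4_tsq2 g_def ..
  also have "\<dots> = ((g Xp)\<^sup>2 + (g Xm)\<^sup>2 - (g XNp)\<^sup>2 - (g XNm)\<^sup>2)\<^sup>2"
    by (rule sum_loss_sign_expansion)
  also have "\<dots> = ((cmod (cinner n b (toC n u)))\<^sup>2 - (cmod (cinner n b xn))\<^sup>2)\<^sup>2"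
    using cmod_cinner_toC_squared[of n b u] cmod_cinner_toC_squared[of n b "vplus n xn"]
    by (simp add: g_def cinner_toC_vplus diff_diff_eq)
  finally show ?thesis .
qed

theorem proposition1:
  fixes n m :: nat and a :: "nat \<Rightarrow> nat \<Rightarrow> complex" and xn :: "nat \<Rightarrow> complex"
    and \<sigma> :: real
  assumes "n \<ge> 1" and "m \<ge> 1" and "\<sigma> > 0"
  shows "\<exists>K::nat. \<exists>eps :: nat \<Rightarrow> real. \<exists>l1 l2 :: nat \<Rightarrow> label.
           K \<ge> 1 \<and> (\<forall>k<K. eps k \<in> {-1, 1}) \<and>
           (\<forall>u :: nat \<Rightarrow> real.
              f_loss n m a xn u
                = tinner (2*n) (\<lambda>idx. \<Sum>i<m. tpow4 (vplus n (a i)) idx) (Utensor n K eps l1 l2 xn u)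
            \<and> tinner (2*n) (\<lambda>idx. \<Sum>i<m. tpow4 (vplus n (a i)) idx) (Utensor n K eps l1 l2 xn u)
                = (real m * \<sigma>^4) * tinner (2*n) (Ttensor n m (real m * \<sigma>^4) a) (Utensor n K eps l1 l2 xn u))"
proof (intro exI conjI allI)
  fix u
  let ?U = "Utensor n 16 loss_sign loss_label1 loss_label2 xn u"
  show "f_loss n m a xn u = tinner (2*n) (\<lambda>idx. \<Sum>i<m. tpow4 (vplus n (a i)) idx) ?U"
    by (simp add: f_loss_def meas_def tinner_sum_left tinner_tpow4_loss_tensor)
  have "real m * \<sigma>^4 \<noteq> 0" using assms(2,3) by auto
  then show "tinner (2*n) (\<lambda>idx. \<Sum>i<m. tpow4 (vplus n (a i)) idx) ?U
      = (real m * \<sigma>^4) * tinner (2*n) (Ttensor n m (real m * \<sigma>^4) a) ?U"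
    unfolding Ttensor_def tinner_scale_left by simp
qed (use loss_sign_cases in auto)

end
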